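(* Let $n\ge 2$, let $A\in\mathrm{Mat}_{n\times n}(\mathbb{R})$, and let $X_A$ be the replicator vector field with payoff matrix $A$. Suppose $q=(q_1,\dots,q_n)\in\mathbb{R}^n$ is a formal equilibrium of $X_A$. Let $B=-EAE^t$, let $\eta_q:\mathbb{R}^{n-1}\to\mathbb{R}^{n-1}$ be given by $\eta_q(u)_i=q_i-\frac{e^{u_i}}{1+\sum_{j=1}^{n-1}e^{u_j}}$, and let $\tilde X_B(u)=B\,\eta_q(u)$ on $\mathbb{R}^{n-1}$. Suppose there exists a matrix $D=(d_{ij})\in\mathrm{Mat}_{(n-1)\times(n-1)}(\mathbb{R})$ such that (1) $DB$ is anti-symmetric, and (2) the 1-form $\big(1+\sum_{i=1}^{n-1}e^{u_i}\big)D^t\eta_q(u)$ on $\mathbb{R}^{n-1}$ is closed, i.e. the matrix $D^tQ_1$ is diagonal, where $Q_1$ is the $(n-1)\times(n-1)$ matrix with entries $(Q_1)_{ij}=q_i-\delta_{ij}$. Then the function $$H_D(u)=\sum_{i=1}^{n-1}\Big(\sum_{k=1}^{n-1}d_{ki}q_k\Big)u_i+\sum_{i=1}^{n-1}\Big(\Big(\sum_{k=1}^{n-1}d_{ki}q_k\Big)-d_{ii}\Big)e^{u_i}$$ is a constant of motion of $\tilde X_B$ on $\mathbb{R}^{n-1}$, and consequently the function $$H_D\circ\phi^{-1}(x)=\sum_{i=1}^{n-1}\Big(\sum_{k=1}^{n-1}d_{ki}q_k\Big)\log\Big(\frac{x_i}{x_n}\Big)+\sum_{i=1}^{n-1}\Big(\Big(\sum_{k=1}^{n-1}d_{ki}q_k\Big)-d_{ii}\Big)\frac{x_i}{x_n}$$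 is a constant of motion of $X_A$ on the interior of the simplex $\Delta^{n-1}$.
   Context: $\Delta^{n-1}=\{x\in\mathbb{R}^n: x_i\ge 0,\ \sum_i x_i=1\}$. The replicator vector field with payoff matrix $A$ is $X_A(x)_i=x_i\big((Ax)_i-x^tAx\big)$, $1\le i\le n$, on $\Delta^{n-1}$. A formal equilibrium of $X_A$ is a point $q\in\mathbb{R}^n$ with $\sum_{i=1}^n q_i=1$ and $(Aq)_i=(Aq)_j$ for all $i,j$. $E$ is the $(n-1)\times n$ matrix $E=[-I_{n-1}\mid \mathbb{1}]$ (row $i$ has $-1$ in column $i$, $1$ in column $n$, zeros elsewhere). $\phi:\mathbb{R}^{n-1}\to(\Delta^{n-1})^\circ$ is the diffeomorphism $\phi(u)=\big(\frac{e^{u_1}}{1+\sum_j e^{u_j}},\dots,\frac{e^{u_{n-1}}}{1+\sum_j e^{u_j}},\frac{1}{1+\sum_j e^{u_j}}\big)$, with inverse $\phi^{-1}(x)=(\log(x_1/x_n),\dots,\log(x_{n-1}/x_n))$; $\tilde X_B$ is the pullback of $X_A|_{(\Delta^{n-1})^\circ}$ by $\phi$. A constant of motion of a vector field is a function constant along its integral curves. *)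

theory Defs
  imports "HOL-Analysis.Analysis"
begin

text \<open>Vectors in R^m are represented as functions nat \<Rightarrow> real, using
  the indices 1..m; matrices as nat \<Rightarrow> nat \<Rightarrow> real, using indices 1..m x 1..k.\<close>

definition mat_vec :: "nat \<Rightarrow> (nat \<Rightarrow> nat \<Rightarrow> real) \<Rightarrow> (nat \<Rightarrow> real) \<Rightarrow> nat \<Rightarrow> real" where
  "mat_vec k M v = (\<lambda>i. \<Sum>j=1..k. M i j * v j)"

definition mat_mult :: "nat \<Rightarrow> (nat \<Rightarrow> nat \<Rightarrow> real) \<Rightarrow> (nat \<Rightarrow> nat \<Rightarrow> real) \<Rightarrow> nat \<Rightarrow> nat \<Rightarrow> real" where
  "mat_mult k M N = (\<lambda>i j. \<Sum>l=1..k. M i l * N l j)"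

definition mat_transpose :: "(nat \<Rightarrow> nat \<Rightarrow> real) \<Rightarrow> nat \<Rightarrow> nat \<Rightarrow> real" where
  "mat_transpose M = (\<lambda>i j. M j i)"

definition replicator :: "nat \<Rightarrow> (nat \<Rightarrow> nat \<Rightarrow> real) \<Rightarrow> (nat \<Rightarrow> real) \<Rightarrow> nat \<Rightarrow> real" where
  "replicator n A x = (\<lambda>i. x i * (mat_vec n A x i - (\<Sum>j=1..n. x j * mat_vec n A x j)))"

definition simplex_interior :: "nat \<Rightarrow> (nat \<Rightarrow> real) set" where
  "simplex_interior n = {x. (\<forall>i\<in>{1..n}. 0 < x i) \<and> (\<Sum>i=1..n. x i) = 1}"

definition formal_equilibrium :: "nat \<Rightarrow> (nat \<Rightarrow> nat \<Rightarrow> real) \<Rightarrow> (nat \<Rightarrow> real) \<Rightarrow> bool" where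
  "formal_equilibrium n A q \<longleftrightarrow> (\<Sum>i=1..n. q i) = 1 \<and>
     (\<forall>i\<in>{1..n}. \<forall>j\<in>{1..n}. mat_vec n A q i = mat_vec n A q j)"

text \<open>The (n-1) x n matrix E = [-I | 1].\<close>
definition Emat :: "nat \<Rightarrow> nat \<Rightarrow> nat \<Rightarrow> real" where
  "Emat n = (\<lambda>i j. (if j = n then 1 else 0) - (if i = j then 1 else 0))"

definition Bmat :: "nat \<Rightarrow> (nat \<Rightarrow> nat \<Rightarrow> real) \<Rightarrow> nat \<Rightarrow> nat \<Rightarrow> real" where
  "Bmat n A = (\<lambda>i j. - mat_mult n (mat_mult n (Emat n) A) (mat_transpose (Emat n)) i j)"

definition eta :: "nat \<Rightarrow> (nat \<Rightarrow> real) \<Rightarrow> (nat \<Rightarrow> real) \<Rightarrow> nat \<Rightarrow> real" where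
  "eta n q u = (\<lambda>i. q i - exp (u i) / (1 + (\<Sum>j=1..n-1. exp (u j))))"

definition Xtilde :: "nat \<Rightarrow> (nat \<Rightarrow> nat \<Rightarrow> real) \<Rightarrow> (nat \<Rightarrow> real) \<Rightarrow> (nat \<Rightarrow> real) \<Rightarrow> nat \<Rightarrow> real" where
  "Xtilde n A q u = mat_vec (n-1) (Bmat n A) (eta n q u)"

text \<open>gamma is an integral curve, defined on the interval T, of the vector field X on
  the set S of R^m (derivatives taken componentwise, one-sided at endpoints of T).\<close>
definition integral_curve ::
  "nat \<Rightarrow> ((nat \<Rightarrow> real) \<Rightarrow> nat \<Rightarrow> real) \<Rightarrow> (nat \<Rightarrow> real) set \<Rightarrow> (real \<Rightarrow> nat \<Rightarrow> real) \<Rightarrow> real set \<Rightarrow> bool" where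
  "integral_curve m X S \<gamma> T \<longleftrightarrow> is_interval T \<and>
     (\<forall>t\<in>T. \<gamma> t \<in> S \<and>
        (\<forall>i\<in>{1..m}. ((\<lambda>s. \<gamma> s i) has_real_derivative X (\<gamma> t) i) (at t within T)))"

definition constant_of_motion ::
  "nat \<Rightarrow> ((nat \<Rightarrow> real) \<Rightarrow> nat \<Rightarrow> real) \<Rightarrow> (nat \<Rightarrow> real) set \<Rightarrow> ((nat \<Rightarrow> real) \<Rightarrow> real) \<Rightarrow> bool" where
  "constant_of_motion m X S H \<longleftrightarrow>
     (\<forall>\<gamma> T. integral_curve m X S \<gamma> T \<longrightarrow> (\<forall>s\<in>T. \<forall>t\<in>T. H (\<gamma> s) = H (\<gamma> t)))"

end

theory Submission
  imports Defs
begin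

(* Write c_i for sum_k d_ki q_k. Condition (2) says that off the diagonal the i-th column
   of D is constant, equal to c_i, so that (D^t (q - y))_i = c_i (1 - sum_k y_k) + (c_i - d_ii) y_i.
   For y = e^u / (1 + sum_j e^(u_j)) this shows that the gradient of H_D is
   (1 + sum_j e^(u_j)) D^t eta_q(u), so along integral curves of X~_B the derivative of H_D is
   (1 + sum_j e^(u_j)) eta^t D B eta, which vanishes because DB is antisymmetric.
   The chart phi^-1, u_i = log (x_i / x_n), maps integral curves of X_A in the open simplex to
   integral curves of X~_B: eta_q(phi^-1 x) = q - x, and since q - x has coordinate sum 0 and q is
   a formal equilibrium, (B (q - x))_i = (Ax)_i - (Ax)_n, the derivative of log (x_i / x_n). *)

lemma constant_of_motionI:
  assumes "\<And>\<gamma> T t. integral_curve m X S \<gamma> T \<Longrightarrow> t \<in> T \<Longrightarrow>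
             ((\<lambda>s. H (\<gamma> s)) has_real_derivative 0) (at t within T)"
  shows "constant_of_motion m X S H"
  unfolding constant_of_motion_def
proof (intro allI impI)
  fix \<gamma> T assume curve: "integral_curve m X S \<gamma> T"
  then have "convex T" by (simp add: integral_curve_def is_interval_convex)
  then obtain c where "\<forall>t\<in>T. H (\<gamma> t) = c"
    using has_field_derivative_zero_constant assms[OF curve] by blast
  then show "\<forall>s\<in>T. \<forall>t\<in>T. H (\<gamma> s) = H (\<gamma> t)" by simp
qed

lemma constant_of_motion_pullback:
  assumes curves: "\<And>\<gamma> T. integral_curve m X S \<gamma> T \<Longrightarrow> integral_curve k Y S' (\<lambda>t. F (\<gamma> t)) T"
    and H: "constant_of_motion k Y S' H"
    and G: "\<And>x. x \<in> S \<Longrightarrow> G x = H (F x)"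
  shows "constant_of_motion m X S G"
  unfolding constant_of_motion_def
proof (intro allI impI ballI)
  fix \<gamma> T s t assume curve: "integral_curve m X S \<gamma> T" and "s \<in> T" "t \<in> T"
  then have "\<gamma> s \<in> S" "\<gamma> t \<in> S" by (auto simp: integral_curve_def)
  moreover have "H (F (\<gamma> s)) = H (F (\<gamma> t))"
    using H curves[OF curve] \<open>s \<in> T\<close> \<open>t \<in> T\<close> by (auto simp: constant_of_motion_def)
  ultimately show "G (\<gamma> s) = G (\<gamma> t)" by (simp add: G)
qed

lemma integral_curve_has_real_derivative_sum:
  assumes curve: "integral_curve m X S \<gamma> T" and "t \<in> T"
    and h: "\<And>i v. i \<in> {1..m} \<Longrightarrow> (h i has_real_derivative h' i v) (at v)"
  shows "((\<lambda>s. \<Sum>i=1..m. h i (\<gamma> s i)) has_real_derivative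
           (\<Sum>i=1..m. h' i (\<gamma> t i) * X (\<gamma> t) i)) (at t within T)"
proof (rule DERIV_sum)
  fix i assume "i \<in> {1..m}"
  then have "((\<lambda>s. \<gamma> s i) has_real_derivative X (\<gamma> t) i) (at t within T)"
    using curve \<open>t \<in> T\<close> by (simp add: integral_curve_def)
  with h[OF \<open>i \<in> {1..m}\<close>]
  show "((\<lambda>s. h i (\<gamma> s i)) has_real_derivative h' i (\<gamma> t i) * X (\<gamma> t) i) (at t within T)"
    by (rule DERIV_chain2)
qed

lemma sum_mat_vec_transpose_mult:
  "(\<Sum>i=1..m. mat_vec m (mat_transpose D) w i * mat_vec m B w i)
     = (\<Sum>k=1..m. \<Sum>j=1..m. w k * mat_mult m D B k j * w j)"
proof -
  have "(\<Sum>i=1..m. mat_vec m (mat_transpose D) w i * mat_vec m B w i)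
      = (\<Sum>i=1..m. \<Sum>k=1..m. \<Sum>j=1..m. w k * (D k i * B i j) * w j)"
    unfolding mat_vec_def mat_transpose_def sum_product by (intro sum.cong refl) (simp add: mult_ac)
  also have "\<dots> = (\<Sum>k=1..m. \<Sum>j=1..m. \<Sum>i=1..m. w k * (D k i * B i j) * w j)"
    by (subst sum.swap) (rule sum.cong[OF refl sum.swap])
  also have "\<dots> = (\<Sum>k=1..m. \<Sum>j=1..m. w k * mat_mult m D B k j * w j)"
    unfolding mat_mult_def sum_distrib_left sum_distrib_right ..
  finally show ?thesis .
qed

lemma quadratic_form_antisym_eq_0:
  fixes M :: "nat \<Rightarrow> nat \<Rightarrow> real"
  assumes "\<forall>i\<in>{1..m}. \<forall>j\<in>{1..m}. M i j = - M j i"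
  shows "(\<Sum>k=1..m. \<Sum>j=1..m. w k * M k j * w j) = 0"
proof -
  have "(\<Sum>k=1..m. \<Sum>j=1..m. w k * M k j * w j) = (\<Sum>j=1..m. \<Sum>k=1..m. w k * M k j * w j)"
    by (rule sum.swap)
  also have "\<dots> = - (\<Sum>j=1..m. \<Sum>k=1..m. w j * M j k * w k)"
    unfolding sum_negf[symmetric]
  proof (intro sum.cong refl)
    fix j k assume "j \<in> {1..m}" "k \<in> {1..m}"
    with assms have "M k j = - M j k" by blast
    then show "w k * M k j * w j = - (w j * M j k * w k)" by simp
  qed
  finally show ?thesis by simp
qed

lemma transpose_mult_diagonal_column_eq:
  assumes diag: "\<forall>i\<in>{1..m}. \<forall>j\<in>{1..m}. i \<noteq> j \<longrightarrow>
        mat_mult m (mat_transpose D) (\<lambda>k l. q k - (if k = l then 1 else 0)) i j = 0"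
    and "i \<in> {1..m}" "j \<in> {1..m}" "j \<noteq> i"
  shows "D j i = (\<Sum>k=1..m. D k i * q k)"
proof -
  have "0 = (\<Sum>k=1..m. D k i * q k - (if k = j then D k i else 0))"
    using diag assms(2-4) unfolding mat_mult_def mat_transpose_def
    by (auto simp: right_diff_distrib if_distrib cong: if_cong)
  also have "\<dots> = (\<Sum>k=1..m. D k i * q k) - D j i"
    using \<open>j \<in> {1..m}\<close> by (simp add: sum_subtractf)
  finally show ?thesis by simp
qed

lemma mat_vec_transpose_diff_eq:
  assumes diag: "\<forall>i\<in>{1..m}. \<forall>j\<in>{1..m}. i \<noteq> j \<longrightarrow>
        mat_mult m (mat_transpose D) (\<lambda>k l. q k - (if k = l then 1 else 0)) i j = 0"
    and i: "i \<in> {1..m}"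
  shows "mat_vec m (mat_transpose D) (\<lambda>k. q k - y k) i
       = (\<Sum>k=1..m. D k i * q k) * (1 - (\<Sum>k=1..m. y k)) + ((\<Sum>k=1..m. D k i * q k) - D i i) * y i"
proof -
  define c where "c = (\<Sum>k=1..m. D k i * q k)"
  have "(\<Sum>k=1..m. D k i * y k) = D i i * y i + (\<Sum>k\<in>{1..m}-{i}. D k i * y k)"
    using i by (simp add: sum.remove)
  also have "(\<Sum>k\<in>{1..m}-{i}. D k i * y k) = c * (\<Sum>k\<in>{1..m}-{i}. y k)"
    using transpose_mult_diagonal_column_eq[OF diag i] by (simp add: sum_distrib_left c_def)
  also have "(\<Sum>k\<in>{1..m}-{i}. y k) = (\<Sum>k=1..m. y k) - y i"
    using i by (simp add: sum_diff1)
  finally have "(\<Sum>k=1..m. D k i * y k) = D i i * y i + c * ((\<Sum>k=1..m. y k) - y i)" .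
  moreover have "mat_vec m (mat_transpose D) (\<lambda>k. q k - y k) i = c - (\<Sum>k=1..m. D k i * y k)"
    by (simp add: mat_vec_def mat_transpose_def right_diff_distrib sum_subtractf c_def)
  ultimately show ?thesis
    unfolding c_def[symmetric] by (simp add: algebra_simps)
qed

lemma Bmat_entry:
  assumes n: "n = Suc m" and "i \<in> {1..m}" "j \<in> {1..m}"
  shows "Bmat n A i j = A i n + A n j - A i j - A n n"
proof -
  have E_row: "(\<Sum>p=1..n. Emat n k p * v p) = v n - v k"
    if "k \<in> {1..m}" for k and v :: "nat \<Rightarrow> real"
    using n that by (simp add: Emat_def left_diff_distrib sum_subtractf of_bool_def[symmetric])
  have "Bmat n A i j = - (\<Sum>l=1..n. Emat n j l * (A n l - A i l))"
    using E_row[OF \<open>i \<in> {1..m}\<close>, of "\<lambda>p. A p _"]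
    by (simp add: Bmat_def mat_mult_def mat_transpose_def mult.commute)
  also have "\<dots> = - ((A n n - A i n) - (A n j - A i j))"
    using E_row[OF \<open>j \<in> {1..m}\<close>] by simp
  finally show ?thesis by simp
qed

lemma Bmat_mat_vec:
  assumes n: "n = Suc m" and w: "(\<Sum>j=1..n. w j) = 0" and i: "i \<in> {1..m}"
  shows "mat_vec m (Bmat n A) w i = mat_vec n A w n - mat_vec n A w i"
proof -
  have "mat_vec m (Bmat n A) w i = (\<Sum>j=1..m. (A i n - A n n) * w j + (A n j - A i j) * w j)"
    unfolding mat_vec_def using n i by (intro sum.cong refl) (simp add: Bmat_entry algebra_simps)
  also have "\<dots> = (A i n - A n n) * (\<Sum>j=1..m. w j) + (\<Sum>j=1..m. (A n j - A i j) * w j)"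
    by (simp add: sum.distrib sum_distrib_left)
  also have "(\<Sum>j=1..m. w j) = - w n"
    using w n by simp
  also have "(A i n - A n n) * - w n + (\<Sum>j=1..m. (A n j - A i j) * w j)
           = (\<Sum>j=1..n. (A n j - A i j) * w j)"
    using n by (simp add: algebra_simps)
  also have "\<dots> = mat_vec n A w n - mat_vec n A w i"
    by (simp add: mat_vec_def left_diff_distrib sum_subtractf)
  finally show ?thesis .
qed

lemma constant_of_motion_Xtilde:
  fixes n :: nat and A D :: "nat \<Rightarrow> nat \<Rightarrow> real" and q :: "nat \<Rightarrow> real"
  assumes antisym: "\<forall>i\<in>{1..n-1}. \<forall>j\<in>{1..n-1}.
        mat_mult (n-1) D (Bmat n A) i j = - mat_mult (n-1) D (Bmat n A) j i"
    and diag: "\<forall>i\<in>{1..n-1}. \<forall>j\<in>{1..n-1}. i \<noteq> j \<longrightarrow>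
        mat_mult (n-1) (mat_transpose D) (\<lambda>k l. q k - (if k = l then 1 else 0)) i j = 0"
  shows "constant_of_motion (n-1) (Xtilde n A q) UNIV
           (\<lambda>u. (\<Sum>i=1..n-1. (\<Sum>k=1..n-1. D k i * q k) * u i)
              + (\<Sum>i=1..n-1. ((\<Sum>k=1..n-1. D k i * q k) - D i i) * exp (u i)))"
proof (rule constant_of_motionI)
  fix \<gamma> T t assume curve: "integral_curve (n-1) (Xtilde n A q) UNIV \<gamma> T" and "t \<in> T"
  define c where "c i = (\<Sum>k=1..n-1. D k i * q k)" for i
  define u where "u = \<gamma> t"
  define S where "S = 1 + (\<Sum>j=1..n-1. exp (u j))"
  define \<eta> where "\<eta> = eta n q u"
  have "S > 0" by (simp add: S_def add_pos_nonneg sum_nonneg)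
  have gradient: "c i + (c i - D i i) * exp (u i) = S * mat_vec (n-1) (mat_transpose D) \<eta> i"
    if "i \<in> {1..n-1}" for i
  proof -
    have "1 - (\<Sum>k=1..n-1. exp (u k) / S) = 1 / S"
      using \<open>S > 0\<close> by (simp add: sum_divide_distrib[symmetric] S_def field_simps)
    then have "mat_vec (n-1) (mat_transpose D) \<eta> i = c i / S + (c i - D i i) * (exp (u i) / S)"
      using mat_vec_transpose_diff_eq[OF diag that, of "\<lambda>k. exp (u k) / S"]
      by (simp add: \<eta>_def eta_def S_def c_def)
    then show ?thesis using \<open>S > 0\<close> by (simp add: field_simps)
  qed
  have "((\<lambda>s. \<Sum>i=1..n-1. c i * \<gamma> s i + (c i - D i i) * exp (\<gamma> s i)) has_real_derivative
          (\<Sum>i=1..n-1. (c i + (c i - D i i) * exp (u i)) * Xtilde n A q u i)) (at t within T)"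
    unfolding u_def
    by (rule integral_curve_has_real_derivative_sum[OF curve \<open>t \<in> T\<close>])
       (auto intro!: derivative_eq_intros)
  moreover have "(\<Sum>i=1..n-1. (c i + (c i - D i i) * exp (u i)) * Xtilde n A q u i)
      = S * (\<Sum>i=1..n-1. mat_vec (n-1) (mat_transpose D) \<eta> i * mat_vec (n-1) (Bmat n A) \<eta> i)"
    by (simp add: gradient Xtilde_def \<eta>_def sum_distrib_left mult.assoc)
  moreover have "(\<Sum>i=1..n-1. mat_vec (n-1) (mat_transpose D) \<eta> i * mat_vec (n-1) (Bmat n A) \<eta> i) = 0"
    unfolding sum_mat_vec_transpose_mult using quadratic_form_antisym_eq_0[OF antisym] .
  ultimately show "((\<lambda>s. (\<Sum>i=1..n-1. (\<Sum>k=1..n-1. D k i * q k) * \<gamma> s i)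
              + (\<Sum>i=1..n-1. ((\<Sum>k=1..n-1. D k i * q k) - D i i) * exp (\<gamma> s i)))
         has_real_derivative 0) (at t within T)"
    by (simp add: sum.distrib c_def)
qed

lemma eta_log_ratio:
  assumes n: "n = Suc m" and x: "x \<in> simplex_interior n" and k: "k \<in> {1..m}"
  shows "eta n q (\<lambda>j. ln (x j / x n)) k = q k - x k"
proof -
  have pos: "0 < x j" if "j \<in> {1..n}" for j
    using x that by (simp add: simplex_interior_def)
  then have "0 < x n" using n by simp
  have "(\<Sum>j=1..m. x j) = 1 - x n"
    using x n by (simp add: simplex_interior_def)
  moreover have "(\<Sum>j=1..m. exp (ln (x j / x n))) = (\<Sum>j=1..m. x j) / x n"
    using pos n \<open>0 < x n\<close> by (simp add: sum_divide_distrib)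
  ultimately have "1 + (\<Sum>j=1..m. exp (ln (x j / x n))) = 1 / x n"
    using \<open>0 < x n\<close> by (simp add: field_simps)
  moreover have "exp (ln (x k / x n)) = x k / x n"
    using pos[of k] k n \<open>0 < x n\<close> by simp
  ultimately show ?thesis
    using n \<open>0 < x n\<close> by (simp add: eta_def)
qed

lemma Xtilde_log_ratio:
  assumes n: "n = Suc m" and eq: "formal_equilibrium n A q"
    and x: "x \<in> simplex_interior n" and i: "i \<in> {1..m}"
  shows "Xtilde n A q (\<lambda>j. ln (x j / x n)) i = mat_vec n A x i - mat_vec n A x n"
proof -
  have "(\<Sum>j=1..n. q j - x j) = 0"
    using eq x by (simp add: sum_subtractf formal_equilibrium_def simplex_interior_def)
  moreover have "mat_vec n A q i = mat_vec n A q n"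
    using eq i n by (simp add: formal_equilibrium_def)
  moreover have "Xtilde n A q (\<lambda>j. ln (x j / x n)) i = mat_vec m (Bmat n A) (\<lambda>j. q j - x j) i"
    using n x by (simp add: Xtilde_def mat_vec_def eta_log_ratio)
  ultimately show ?thesis
    using Bmat_mat_vec[OF n _ i, of "\<lambda>j. q j - x j" A]
    by (simp add: mat_vec_def right_diff_distrib sum_subtractf)
qed

lemma integral_curve_log_ratio:
  assumes n: "n = Suc m" and eq: "formal_equilibrium n A q"
    and curve: "integral_curve n (replicator n A) (simplex_interior n) \<gamma> T"
  shows "integral_curve m (Xtilde n A q) UNIV (\<lambda>t j. ln (\<gamma> t j / \<gamma> t n)) T"
  unfolding integral_curve_def
proof (intro conjI ballI)
  show "is_interval T" using curve by (simp add: integral_curve_def)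
next
  fix t i assume "t \<in> T" "i \<in> {1..m}"
  define x where "x = \<gamma> t"
  have x: "x \<in> simplex_interior n" using curve \<open>t \<in> T\<close> by (simp add: integral_curve_def x_def)
  have "0 < x i" "0 < x n" using x \<open>i \<in> {1..m}\<close> n by (auto simp: simplex_interior_def)
  have deriv: "((\<lambda>s. \<gamma> s j) has_real_derivative replicator n A x j) (at t within T)"
    if "j \<in> {1..n}" for j
    using curve \<open>t \<in> T\<close> that by (simp add: integral_curve_def x_def)
  have "((\<lambda>s. ln (\<gamma> s i / \<gamma> s n)) has_real_derivative
          1 / (x i / x n) * ((replicator n A x i * x n - x i * replicator n A x n) / (x n * x n)))
        (at t within T)"
    using \<open>0 < x i\<close> \<open>0 < x n\<close> deriv[of i] deriv[of n] \<open>i \<in> {1..m}\<close> n unfolding x_def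
    by (intro DERIV_chain2[OF DERIV_ln_divide] DERIV_divide) auto
  moreover have "1 / (x i / x n) * ((replicator n A x i * x n - x i * replicator n A x n) / (x n * x n))
      = Xtilde n A q (\<lambda>j. ln (x j / x n)) i"
    using \<open>0 < x i\<close> \<open>0 < x n\<close>
    by (simp add: Xtilde_log_ratio[OF n eq x \<open>i \<in> {1..m}\<close>] replicator_def field_simps)
  ultimately show "((\<lambda>s. ln (\<gamma> s i / \<gamma> s n)) has_real_derivative
          Xtilde n A q (\<lambda>j. ln (\<gamma> t j / \<gamma> t n)) i) (at t within T)"
    by (simp add: x_def)
qed simp

theorem theorem3p1:
  fixes n :: nat and A D :: "nat \<Rightarrow> nat \<Rightarrow> real" and q :: "nat \<Rightarrow> real"
  assumes n2: "n \<ge> 2"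
    and eq: "formal_equilibrium n A q"
    and antisym: "\<forall>i\<in>{1..n-1}. \<forall>j\<in>{1..n-1}.
        mat_mult (n-1) D (Bmat n A) i j = - mat_mult (n-1) D (Bmat n A) j i"
    and diag: "\<forall>i\<in>{1..n-1}. \<forall>j\<in>{1..n-1}. i \<noteq> j \<longrightarrow>
        mat_mult (n-1) (mat_transpose D) (\<lambda>k l. q k - (if k = l then 1 else 0)) i j = 0"
  shows "constant_of_motion (n-1) (Xtilde n A q) UNIV
           (\<lambda>u. (\<Sum>i=1..n-1. (\<Sum>k=1..n-1. D k i * q k) * u i)
              + (\<Sum>i=1..n-1. ((\<Sum>k=1..n-1. D k i * q k) - D i i) * exp (u i)))
       \<and> constant_of_motion n (replicator n A) (simplex_interior n)
           (\<lambda>x. (\<Sum>i=1..n-1. (\<Sum>k=1..n-1. D k i * q k) * ln (x i / x n))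
              + (\<Sum>i=1..n-1. ((\<Sum>k=1..n-1. D k i * q k) - D i i) * (x i / x n)))"
    (is "constant_of_motion _ _ _ ?H \<and> constant_of_motion _ _ _ ?G")
proof
  show H: "constant_of_motion (n-1) (Xtilde n A q) UNIV ?H"
    using constant_of_motion_Xtilde[OF antisym diag] .
  define m where "m = n - 1"
  have n: "n = Suc m" using n2 by (simp add: m_def)
  have G: "?G x = ?H (\<lambda>i. ln (x i / x n))" if "x \<in> simplex_interior n" for x
  proof -
    have "exp (ln (x i / x n)) = x i / x n" if "i \<in> {1..n-1}" for i
      using \<open>x \<in> simplex_interior n\<close> that n by (simp add: simplex_interior_def)
    then show ?thesis by simp
  qed
  show "constant_of_motion n (replicator n A) (simplex_interior n) ?G"
    using integral_curve_log_ratio[OF n eq, unfolded m_def] H G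
    by (rule constant_of_motion_pullback[where F = "\<lambda>x i. ln (x i / x n)"])
qed

end
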